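(* Let $N=\{1,\dots,n\}$ and let $F:2^N\to\mathbb{R}$ be quasi-submodular. Run the minimization procedure (described in the context) once from $X_0=\emptyset$ and let $Q_+$ be its output, and once from $X_0=N$ and let $S_+$ be its output. Then every global minimizer of $F$ lies in the set interval lattice $[Q_+,S_+]$, i.e., for every $X_*\in\arg\min_{X\subseteq N}F(X)$ we have $Q_+\subseteq X_*\subseteq S_+$.
   Context: For $A\subseteq N$ and $i\in N$, write $A+i=A\cup\{i\}$, $A-i=A\setminus\{i\}$, and $F(i\mid A)=F(A+i)-F(A)$. A set function $F:2^N\to\mathbb{R}$ is quasi-submodular if for all $X,Y\subseteq N$ both hold: $F(X\cap Y)\ge F(X)\Rightarrow F(Y)\ge F(X\cup Y)$, and $F(X\cap Y)>F(X)\Rightarrow F(Y)>F(X\cup Y)$. For sets $A,B$, the set interval lattice is $[A,B]=\{U: A\subseteq U\subseteq B\}$. Minimization procedure: given $X_0\subseteq N$, for $t=0,1,2,\dots$: let $U_t=\{u\in N\setminus X_t: F(u\mid X_t)<0\}$ and $Y_t=X_t\cup U_t$; let $D_t=\{d\in X_t: F(d\mid Y_t-d)>0\}$ and $X_{t+1}=Y_t\setminus D_t$; if $X_{t+1}=X_t$, stop and output $X_t$; otherwise continue with $t+1$. *)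

theory Defs
  imports Main "HOL.Real"
begin

definition marg :: "('a set \<Rightarrow> real) \<Rightarrow> 'a \<Rightarrow> 'a set \<Rightarrow> real" where
  "marg F i A = F (insert i A) - F A"

definition quasi_submodular :: "'a set \<Rightarrow> ('a set \<Rightarrow> real) \<Rightarrow> bool" where
  "quasi_submodular N F \<longleftrightarrow>
     (\<forall>X Y. X \<subseteq> N \<longrightarrow> Y \<subseteq> N \<longrightarrow>
        (F (X \<inter> Y) \<ge> F X \<longrightarrow> F Y \<ge> F (X \<union> Y)) \<and>
        (F (X \<inter> Y) > F X \<longrightarrow> F Y > F (X \<union> Y)))"

definition min_step :: "'a set \<Rightarrow> ('a set \<Rightarrow> real) \<Rightarrow> 'a set \<Rightarrow> 'a set" where
  "min_step N F X =
     (let U = {u \<in> N - X. marg F u X < 0};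
          Y = X \<union> U;
          D = {d \<in> X. marg F d (Y - {d}) > 0}
      in Y - D)"

(* Q is the output of the procedure started at X0: the iterate X_t at which the
   procedure stops (X_{t+1} = X_t); once stopped the iterates are constant,
   so this output is unique when it exists *)
definition min_output :: "'a set \<Rightarrow> ('a set \<Rightarrow> real) \<Rightarrow> 'a set \<Rightarrow> 'a set \<Rightarrow> bool" where
  "min_output N F X0 Q \<longleftrightarrow>
     (\<exists>t. Q = (min_step N F ^^ t) X0 \<and> min_step N F Q = Q)"

end

theory Submission
  imports Defs
begin

text \<open>A global minimiser \<open>X\<^sub>*\<close> is a barrier for the procedure from both sides. Below \<open>X\<^sub>*\<close>,
  an element \<open>u \<notin> X\<^sub>*\<close> with \<open>F(u | X) < 0\<close> for some \<open>X \<subseteq> X\<^sub>*\<close> would, by the strict form of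
  quasi-submodularity applied to \<open>X + u\<close> and \<open>X\<^sub>*\<close>, give \<open>F(X\<^sub>* + u) < F(X\<^sub>*)\<close>; so iterates
  starting inside \<open>X\<^sub>*\<close> stay inside. Above \<open>X\<^sub>*\<close>, an element \<open>d \<in> X\<^sub>*\<close> with \<open>F(d | Y - d) > 0\<close>
  for some \<open>Y \<supseteq> X\<^sub>*\<close> contradicts the weak form applied to \<open>X\<^sub>*\<close> and \<open>Y - d\<close>, since
  \<open>F(X\<^sub>* - d) \<ge> F(X\<^sub>*)\<close>; so iterates starting above \<open>X\<^sub>*\<close> stay above.\<close>

lemma quasi_submodularD:
  "\<lbrakk>quasi_submodular N F; X \<subseteq> N; Y \<subseteq> N; F X \<le> F (X \<inter> Y)\<rbrakk> \<Longrightarrow> F (X \<union> Y) \<le> F Y"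
  unfolding quasi_submodular_def by blast

lemma quasi_submodular_strictD:
  "\<lbrakk>quasi_submodular N F; X \<subseteq> N; Y \<subseteq> N; F X < F (X \<inter> Y)\<rbrakk> \<Longrightarrow> F (X \<union> Y) < F Y"
  unfolding quasi_submodular_def by blast

definition global_minimizer :: "'a set \<Rightarrow> ('a set \<Rightarrow> real) \<Rightarrow> 'a set \<Rightarrow> bool" where
  "global_minimizer N F M \<longleftrightarrow> M \<subseteq> N \<and> (\<forall>X. X \<subseteq> N \<longrightarrow> F M \<le> F X)"

lemma quasi_submodular_improving_element_in_minimizer:
  assumes qs: "quasi_submodular N F" and min: "global_minimizer N F M"
    and "X \<subseteq> M" and u: "u \<in> N" "marg F u X < 0"
  shows "u \<in> M"
proof (rule ccontr)
  assume "u \<notin> M"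
  then have meet: "insert u X \<inter> M = X" and join: "insert u X \<union> M = insert u M"
    using \<open>X \<subseteq> M\<close> by blast+
  have "insert u X \<subseteq> N" using u \<open>X \<subseteq> M\<close> min by (auto simp: global_minimizer_def)
  moreover have "F (insert u X) < F X" using u by (simp add: marg_def)
  ultimately have "F (insert u M) < F M"
    using quasi_submodular_strictD[OF qs, of "insert u X" M] min meet join
    by (simp add: global_minimizer_def)
  moreover have "F M \<le> F (insert u M)" using min u by (simp add: global_minimizer_def)
  ultimately show False by linarith
qed

lemma quasi_submodular_minimizer_element_not_removable:
  assumes qs: "quasi_submodular N F" and min: "global_minimizer N F M"
    and "M \<subseteq> Y" "Y \<subseteq> N" and "d \<in> M"
  shows "marg F d (Y - {d}) \<le> 0"
proof -
  have meet: "M \<inter> (Y - {d}) = M - {d}" and join: "M \<union> (Y - {d}) = Y"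
    and reinsert: "insert d (Y - {d}) = Y"
    using \<open>M \<subseteq> Y\<close> \<open>d \<in> M\<close> by blast+
  have "M \<subseteq> N" "F M \<le> F (M - {d})"
    using min unfolding global_minimizer_def by (meson Diff_subset order_trans)+
  then have "F Y \<le> F (Y - {d})"
    using quasi_submodularD[OF qs, of M "Y - {d}"] \<open>Y \<subseteq> N\<close> meet join by auto
  then show ?thesis using reinsert by (simp add: marg_def)
qed

lemma min_step_subset_ground: "X \<subseteq> N \<Longrightarrow> min_step N F X \<subseteq> N"
  by (auto simp: min_step_def Let_def)

lemma min_step_subset_minimizer:
  assumes "quasi_submodular N F" "global_minimizer N F M" "X \<subseteq> M"
  shows "min_step N F X \<subseteq> M"
  using quasi_submodular_improving_element_in_minimizer[OF assms] \<open>X \<subseteq> M\<close>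
  unfolding min_step_def Let_def by blast

lemma minimizer_subset_min_step:
  assumes qs: "quasi_submodular N F" and min: "global_minimizer N F M"
    and "M \<subseteq> X" "X \<subseteq> N"
  shows "M \<subseteq> min_step N F X"
proof -
  define Y where "Y = X \<union> {u \<in> N - X. marg F u X < 0}"
  have "M \<subseteq> Y" "Y \<subseteq> N" using \<open>M \<subseteq> X\<close> \<open>X \<subseteq> N\<close> by (auto simp: Y_def)
  have "min_step N F X = Y - {d \<in> X. marg F d (Y - {d}) > 0}"
    unfolding min_step_def Let_def Y_def by simp
  moreover have "\<not> marg F d (Y - {d}) > 0" if "d \<in> M" for d
    using quasi_submodular_minimizer_element_not_removable[OF qs min \<open>M \<subseteq> Y\<close> \<open>Y \<subseteq> N\<close> that]
    by simp
  ultimately show ?thesis using \<open>M \<subseteq> Y\<close> by auto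
qed

lemma min_output_subset_minimizer:
  assumes qs: "quasi_submodular N F" and min: "global_minimizer N F M"
    and "X0 \<subseteq> M" and "min_output N F X0 Q"
  shows "Q \<subseteq> M"
proof -
  have "(min_step N F ^^ t) X0 \<subseteq> M" for t
    by (induction t) (simp_all add: \<open>X0 \<subseteq> M\<close> min_step_subset_minimizer[OF qs min])
  then show ?thesis using \<open>min_output N F X0 Q\<close> by (auto simp: min_output_def)
qed

lemma minimizer_subset_min_output:
  assumes qs: "quasi_submodular N F" and min: "global_minimizer N F M"
    and "M \<subseteq> X0" "X0 \<subseteq> N" and "min_output N F X0 Q"
  shows "M \<subseteq> Q"
proof -
  have "M \<subseteq> (min_step N F ^^ t) X0 \<and> (min_step N F ^^ t) X0 \<subseteq> N" for t
    by (induction t)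
      (simp_all add: assms(3,4) minimizer_subset_min_step[OF qs min] min_step_subset_ground)
  then show ?thesis using \<open>min_output N F X0 Q\<close> by (auto simp: min_output_def)
qed

theorem theorem1:
  fixes n :: nat and F :: "nat set \<Rightarrow> real" and Qp Sp Xs :: "nat set"
  assumes "quasi_submodular {1..n} F"
    and "min_output {1..n} F {} Qp"
    and "min_output {1..n} F {1..n} Sp"
    and "Xs \<subseteq> {1..n}"
    and "\<forall>X. X \<subseteq> {1..n} \<longrightarrow> F Xs \<le> F X"
  shows "Qp \<subseteq> Xs \<and> Xs \<subseteq> Sp"
proof -
  have min: "global_minimizer {1..n} F Xs"
    using assms(4,5) by (simp add: global_minimizer_def)
  show ?thesis
    using min_output_subset_minimizer[OF assms(1) min _ assms(2)]
      minimizer_subset_min_output[OF assms(1) min assms(4) _ assms(3)] by simp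
qed

end
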